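(* Let $X$ be a finite set and $f$ a closure operator on $X$. Then the minimum number of weak orders (MNWO) of $f$ equals the width of the partially ordered set $(P(f),\subseteq)$, and the minimum number of binary classifiers (MNBC) of $f$ equals the cardinality of $B(f)$.
   Context: A closure operator on $X$ is a map $f:2^X\to 2^X$ with $A\subseteq f(A)$, $f(\emptyset)=\emptyset$, $f(f(A))=f(A)$, and $A\subseteq B\Rightarrow f(A)\subseteq f(B)$. $S(f)=\{A: f(A)=A\}$ is its set of closed sets. For a weak order (complete, transitive relation) $\succeq$ on $X$, the strategically rational operator $g_{\succeq}$ is defined by $g_\succeq(\emptyset)=\emptyset$ and, for nonempty $A$, $g_\succeq(A)=\{x\in X: \exists a\in A,\ a\succeq x\}$ (equivalently, $\{x: h_A(\succeq)\succeq x\}$ where $h_A(\succeq)$ is the set of $\succeq$-maximal elements of $A$). For $C\subseteq X$, the binary classifier $g_C$ is defined by $g_C(\emptyset)=\emptyset$, and for nonempty $A$, $g_C(A)=C$ if $A\subseteq C$ and $g_C(A)=X$ otherwise. The MNWO of $f$ is the smallest $n$ such that there are weak orders $\succeq_1,\ldots,\succeq_n$ with $f(A)=\bigcap_{i=1}^n g_{\succeq_i}(A)$ for all $A$; the MNBC of $f$ is the smallest $n$ such that there are subsets $C_1,\ldots,C_n$ of $X$ with $f(A)=\bigcap_{i=1}^n g_{C_i}(A)$ for all $A$. $P(f)$ denotes the set of elements of $S(f)$ that are not the intersection of other closed sets in $S(f)$, and $B(f)=P(f)\setminus\{\emptyset,X\}$. The width of a finite poset is the maximum cardinality of an antichain.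 *)

theory Defs
  imports Main
begin

text \<open>Ground set X is the universe of a finite type 'a (so X = UNIV, finite and nonempty).\<close>

definition closure_op :: "('a set \<Rightarrow> 'a set) \<Rightarrow> bool" where
  "closure_op f \<longleftrightarrow> (\<forall>A. A \<subseteq> f A) \<and> f {} = {} \<and> (\<forall>A. f (f A) = f A)
                      \<and> (\<forall>A B. A \<subseteq> B \<longrightarrow> f A \<subseteq> f B)"

definition closed_sets :: "('a set \<Rightarrow> 'a set) \<Rightarrow> 'a set set" where
  "closed_sets f = {A. f A = A}"

text \<open>P(f): closed sets that are not the intersection of other closed sets
  (intersection of the empty family is X = UNIV).\<close>
definition P_sets :: "('a set \<Rightarrow> 'a set) \<Rightarrow> 'a set set" where
  "P_sets f = {A \<in> closed_sets f. \<not> (\<exists>F. F \<subseteq> closed_sets f - {A} \<and> A = \<Inter>F)}"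

definition B_sets :: "('a set \<Rightarrow> 'a set) \<Rightarrow> 'a set set" where
  "B_sets f = P_sets f - {{}, UNIV}"

definition weak_order :: "('a \<Rightarrow> 'a \<Rightarrow> bool) \<Rightarrow> bool" where
  "weak_order R \<longleftrightarrow> (\<forall>x y. R x y \<or> R y x) \<and> (\<forall>x y z. R x y \<longrightarrow> R y z \<longrightarrow> R x z)"

text \<open>strategically rational operator; R a x means a \<succeq> x\<close>
definition g_wo :: "('a \<Rightarrow> 'a \<Rightarrow> bool) \<Rightarrow> 'a set \<Rightarrow> 'a set" where
  "g_wo R A = (if A = {} then {} else {x. \<exists>a\<in>A. R a x})"

definition g_bc :: "'a set \<Rightarrow> 'a set \<Rightarrow> 'a set" where
  "g_bc C A = (if A = {} then {} else if A \<subseteq> C then C else UNIV)"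

text \<open>MNWO: literal reading; the intersection of the empty family is X, so n = 0
  never works (f {} = {}).\<close>
definition MNWO :: "('a set \<Rightarrow> 'a set) \<Rightarrow> nat" where
  "MNWO f = (LEAST n. \<exists>R. (\<forall>i<n. weak_order (R i)) \<and>
                          (\<forall>A. f A = (\<Inter>i\<in>{..<n}. g_wo (R i) A)))"

text \<open>MNBC: the identity is required on nonempty A (on A = {} both sides are {}
  for n \<ge> 1; for n = 0 this is the convention that no classifier represents the
  trivial operator).\<close>
definition MNBC :: "('a set \<Rightarrow> 'a set) \<Rightarrow> nat" where
  "MNBC f = (LEAST n. \<exists>C. \<forall>A. A \<noteq> {} \<longrightarrow> f A = (\<Inter>i\<in>{..<n}. g_bc (C i) A))"

definition is_antichain :: "'a set set \<Rightarrow> bool" where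
  "is_antichain Q \<longleftrightarrow> (\<forall>x\<in>Q. \<forall>y\<in>Q. x \<subseteq> y \<longrightarrow> x = y)"

definition width :: "'a set set \<Rightarrow> nat" where
  "width Q = Max {card Y | Y. Y \<subseteq> Q \<and> is_antichain Y}"

end

theory Submission
  imports Defs
begin

text \<open>Every closed set of \<open>f\<close> is the intersection of the members of \<open>P(f)\<close> above it, so
  \<open>f A = \<Inter>{B \<in> P(f). A \<subseteq> B}\<close>. If \<open>f\<close> is an intersection of extensive idempotent operators
  \<open>g\<^sub>i\<close>, the sets \<open>g\<^sub>i B\<close> are closed and intersect to \<open>B\<close>, so every nonempty \<open>B \<in> P(f)\<close> is a
  fixed point of some \<open>g\<^sub>i\<close>. The fixed points of a strategically rational operator are the
  down-sets of its weak order and form a chain, hence meet an antichain of \<open>P(f)\<close> at most once;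
  a binary classifier \<open>g\<^sub>C\<close> fixes only \<open>C\<close> among the sets other than \<open>\<emptyset>\<close> and \<open>X\<close>. This gives
  the lower bounds. Conversely, Dilworth's theorem covers \<open>P(f)\<close> by \<open>width P(f)\<close> chains, and a
  chain \<open>K\<close> yields the weak order "every member of \<open>K\<close> containing \<open>a\<close> contains \<open>x\<close>", whose
  operator sends \<open>A\<close> to the smallest member of \<open>K\<close> containing \<open>A\<close>; for binary classifiers
  one takes \<open>g\<^sub>B\<close> for all \<open>B \<in> B(f)\<close>.\<close>

section \<open>Dilworth's theorem\<close>

definition chain_colouring :: "nat \<Rightarrow> ('b set \<Rightarrow> nat) \<Rightarrow> 'b set set \<Rightarrow> bool" where
  "chain_colouring k col P \<longleftrightarrow> (\<forall>x\<in>P. col x < k) \<and> (\<forall>i. chain\<^sub>\<subseteq> {x \<in> P. col x = i})"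

lemma chain_colouring_extend:
  assumes "chain_colouring k col (P - K)" and "chain\<^sub>\<subseteq> K"
  shows "\<exists>col'. chain_colouring (Suc k) col' P"
proof
  have "chain\<^sub>\<subseteq> {x \<in> P. (if x \<in> K then k else col x) = i}" for i
  proof (cases "i = k")
    case True
    then have "{x \<in> P. (if x \<in> K then k else col x) = i} \<subseteq> K"
      using assms(1) unfolding chain_colouring_def by auto
    then show ?thesis using assms(2) unfolding chain_subset_def by blast
  next
    case False
    then have "{x \<in> P. (if x \<in> K then k else col x) = i} = {x \<in> P - K. col x = i}" by auto
    then show ?thesis using assms(1) unfolding chain_colouring_def by simp
  qed
  then show "chain_colouring (Suc k) (\<lambda>x. if x \<in> K then k else col x) P"
    using assms(1) unfolding chain_colouring_def by (simp add: less_Suc_eq)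
qed

lemma colour_image_of_antichain:
  assumes "finite P" "chain_colouring k col P" "Y \<subseteq> P" "is_antichain Y" "card Y = k"
  shows "col ` Y = {..<k}"
proof (rule card_subset_eq)
  have "inj_on col Y"
  proof (rule inj_onI)
    fix u v assume "u \<in> Y" "v \<in> Y" "col u = col v"
    then have "u \<subseteq> v \<or> v \<subseteq> u"
      using assms(2,3) unfolding chain_colouring_def chain_subset_def by blast
    then show "u = v" using \<open>u \<in> Y\<close> \<open>v \<in> Y\<close> assms(4) unfolding is_antichain_def by blast
  qed
  then show "card (col ` Y) = card {..<k}" using assms(5) by (simp add: card_image)
  show "col ` Y \<subseteq> {..<k}" using assms(2,3) unfolding chain_colouring_def by auto
qed simp

definition colour_top :: "('b set \<Rightarrow> nat) \<Rightarrow> nat \<Rightarrow> 'b set set \<Rightarrow> nat \<Rightarrow> 'b set" where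
  "colour_top col k P i = \<Union>{y. col y = i \<and> (\<exists>Y\<subseteq>P. is_antichain Y \<and> card Y = k \<and> y \<in> Y)}"

lemma colour_top:
  assumes "finite P" "chain_colouring k col P" "i < k"
    and "Y\<^sub>0 \<subseteq> P" "is_antichain Y\<^sub>0" "card Y\<^sub>0 = k"
  shows colour_top_colour: "col (colour_top col k P i) = i"
    and colour_top_in_antichain: "\<exists>Y\<subseteq>P. is_antichain Y \<and> card Y = k \<and> colour_top col k P i \<in> Y"
    and below_colour_top: "\<And>Y. Y \<subseteq> P \<Longrightarrow> is_antichain Y \<Longrightarrow> card Y = k
      \<Longrightarrow> \<exists>y\<in>Y. col y = i \<and> y \<subseteq> colour_top col k P i"
proof -
  define T where "T = {y. col y = i \<and> (\<exists>Y\<subseteq>P. is_antichain Y \<and> card Y = k \<and> y \<in> Y)}"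
  have t: "colour_top col k P i = \<Union>T" unfolding colour_top_def T_def ..
  have in_T: "\<exists>y\<in>Y. y \<in> T" if Y: "Y \<subseteq> P" "is_antichain Y" "card Y = k" for Y
  proof -
    have "i \<in> col ` Y" using colour_image_of_antichain[OF assms(1,2) Y] assms(3) by simp
    then show ?thesis using Y unfolding T_def by blast
  qed
  have T_sub: "T \<subseteq> {x \<in> P. col x = i}" unfolding T_def by blast
  have "chain\<^sub>\<subseteq> {x \<in> P. col x = i}" using assms(2) unfolding chain_colouring_def by blast
  with T_sub have "chain\<^sub>\<subseteq> T" unfolding chain_subset_def by blast
  moreover have "finite T" using T_sub assms(1) finite_subset by fastforce
  moreover have "T \<noteq> {}" using in_T[OF assms(4-6)] by blast
  ultimately have "colour_top col k P i \<in> T"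
    unfolding t by (simp add: Union_in_chain chain_subset_alt_def)
  then show "col (colour_top col k P i) = i"
    and "\<exists>Y\<subseteq>P. is_antichain Y \<and> card Y = k \<and> colour_top col k P i \<in> Y"
    unfolding T_def by blast+
  show "\<exists>y\<in>Y. col y = i \<and> y \<subseteq> colour_top col k P i"
    if "Y \<subseteq> P" "is_antichain Y" "card Y = k" for Y
    using in_T[OF that] unfolding t T_def by blast
qed

lemma colour_tops_antichain:
  assumes "finite P" "chain_colouring k col P"
    and "Y\<^sub>0 \<subseteq> P" "is_antichain Y\<^sub>0" "card Y\<^sub>0 = k"
  shows "is_antichain (colour_top col k P ` {..<k})"
  unfolding is_antichain_def
proof (intro ballI impI)
  let ?t = "colour_top col k P"
  fix u v assume "u \<in> ?t ` {..<k}" "v \<in> ?t ` {..<k}" "u \<subseteq> v"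
  then obtain i j where ij: "i < k" "j < k" "u = ?t i" "v = ?t j" by blast
  obtain Y where Y: "Y \<subseteq> P" "is_antichain Y" "card Y = k" "?t j \<in> Y"
    using colour_top_in_antichain[OF assms(1,2) ij(2) assms(3-5)] by blast
  obtain y where y: "y \<in> Y" "col y = i" "y \<subseteq> ?t i"
    using below_colour_top[OF assms(1,2) ij(1) assms(3-5) Y(1-3)] by blast
  have "y \<subseteq> ?t j" using y(3) \<open>u \<subseteq> v\<close> unfolding ij(3,4) by (rule subset_trans)
  then have "y = ?t j" using Y(2,4) y(1) unfolding is_antichain_def by blast
  then have "i = j" using y(2) colour_top_colour[OF assms(1,2) ij(2) assms(3-5)] by simp
  then show "u = v" using ij(3,4) by simp
qed

lemma is_antichain_insert:
  assumes "is_antichain Y" and "\<forall>y\<in>Y. \<not> a \<subseteq> y \<and> \<not> y \<subseteq> a"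
  shows "is_antichain (insert a Y)"
  using assms unfolding is_antichain_def by blast

text \<open>Galvin's step: the colour tops form an antichain of size \<open>k\<close>, so the new maximal element \<open>a\<close>
  lies above one of them, and \<open>a\<close> together with that colour class up to its top meets every
  antichain of size \<open>k\<close>.\<close>

lemma chain_through_maximal_meets_maximum_antichains:
  assumes "finite P" "chain_colouring k col P"
    and "Y\<^sub>0 \<subseteq> P" "is_antichain Y\<^sub>0" "card Y\<^sub>0 = k"
    and a_max: "\<forall>b\<in>P. \<not> a \<subseteq> b"
    and width: "\<forall>Y\<subseteq>insert a P. is_antichain Y \<longrightarrow> card Y \<le> k"
  shows "\<exists>K. chain\<^sub>\<subseteq> K \<and> a \<in> K \<and> (\<forall>Y\<subseteq>P - K. is_antichain Y \<longrightarrow> card Y \<noteq> k)"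
proof -
  let ?t = "colour_top col k P"
  have t_in_P: "?t i \<in> P" if "i < k" for i
    using colour_top_in_antichain[OF assms(1,2) that assms(3-5)] by blast
  have "\<exists>i<k. ?t i \<subseteq> a"
  proof (rule ccontr)
    assume not_below: "\<not> (\<exists>i<k. ?t i \<subseteq> a)"
    have antichain: "is_antichain (insert a (?t ` {..<k}))"
    proof (rule is_antichain_insert[OF colour_tops_antichain[OF assms(1-5)]], intro ballI conjI)
      fix u assume "u \<in> ?t ` {..<k}"
      then show "\<not> a \<subseteq> u" "\<not> u \<subseteq> a" using a_max t_in_P not_below by auto
    qed
    have "inj_on ?t {..<k}"
      using colour_top_colour[OF assms(1,2) _ assms(3-5)] by (metis inj_onI lessThan_iff)
    then have "card (?t ` {..<k}) = k" by (simp add: card_image)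
    moreover have "a \<notin> ?t ` {..<k}" using a_max t_in_P by blast
    ultimately have card: "card (insert a (?t ` {..<k})) = Suc k" by simp
    have "insert a (?t ` {..<k}) \<subseteq> insert a P" using t_in_P by blast
    then show False using width[rule_format, OF _ antichain] card by simp
  qed
  then obtain i where "i < k" "?t i \<subseteq> a" by blast
  define K where "K = insert a {z \<in> P. col z = i \<and> z \<subseteq> ?t i}"
  have "chain\<^sub>\<subseteq> {z \<in> P. col z = i}" using assms(2) unfolding chain_colouring_def by blast
  then have "chain\<^sub>\<subseteq> K"
    using \<open>?t i \<subseteq> a\<close> unfolding K_def chain_subset_def by auto
  moreover have "card Y \<noteq> k" if Y: "Y \<subseteq> P - K" "is_antichain Y" for Y
  proof
    assume "card Y = k"
    then obtain y where "y \<in> Y" "col y = i" "y \<subseteq> ?t i"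
      using below_colour_top[OF assms(1,2) \<open>i < k\<close> assms(3-5)] Y by blast
    then show False using Y(1) unfolding K_def by blast
  qed
  moreover have "a \<in> K" unfolding K_def by simp
  ultimately show ?thesis by blast
qed

lemma chain_through_maximal_reduces_width:
  assumes "finite P" "a \<in> P" "\<forall>b\<in>P. a \<subseteq> b \<longrightarrow> a = b"
    and "chain_colouring k col (P - {a})"
    and width: "\<forall>Y\<subseteq>P. is_antichain Y \<longrightarrow> card Y \<le> k"
  shows "\<exists>K. chain\<^sub>\<subseteq> K \<and> a \<in> K \<and> (\<forall>Y\<subseteq>P - K. is_antichain Y \<longrightarrow> card Y \<noteq> k)"
proof (cases "\<exists>Y\<subseteq>P - {a}. is_antichain Y \<and> card Y = k")
  case True
  then obtain Y\<^sub>0 where Y\<^sub>0: "Y\<^sub>0 \<subseteq> P - {a}" "is_antichain Y\<^sub>0" "card Y\<^sub>0 = k" by blast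
  have a_max: "\<forall>b\<in>P - {a}. \<not> a \<subseteq> b" using assms(3) by blast
  have "\<forall>Y\<subseteq>insert a (P - {a}). is_antichain Y \<longrightarrow> card Y \<le> k"
    using width assms(2) by (simp add: insert_absorb)
  from chain_through_maximal_meets_maximum_antichains[OF finite_Diff[OF assms(1)] assms(4) Y\<^sub>0
      a_max this]
  obtain K where K: "chain\<^sub>\<subseteq> K" "a \<in> K" "\<forall>Y\<subseteq>P - {a} - K. is_antichain Y \<longrightarrow> card Y \<noteq> k"
    by blast
  have "P - {a} - K = P - K" using K(2) by blast
  then have "\<forall>Y\<subseteq>P - K. is_antichain Y \<longrightarrow> card Y \<noteq> k" using K(3) by simp
  with K(1,2) show ?thesis by blast
next
  case False
  then have "\<forall>Y\<subseteq>P - {a}. is_antichain Y \<longrightarrow> card Y \<noteq> k" by blast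
  moreover have "chain\<^sub>\<subseteq> {a}" by (simp add: chain_subset_def)
  ultimately show ?thesis by blast
qed

lemma chain_colouring_exists:
  assumes "finite P" "\<forall>Y\<subseteq>P. is_antichain Y \<longrightarrow> card Y \<le> k"
  shows "\<exists>col. chain_colouring k col P"
  using assms
proof (induction "card P" arbitrary: P k rule: less_induct)
  case less
  show ?case
  proof (cases "P = {}")
    case True
    then show ?thesis unfolding chain_colouring_def chain_subset_def by blast
  next
    case False
    obtain a where "a \<in> P" and a_max: "\<forall>b\<in>P. a \<subseteq> b \<longrightarrow> a = b"
      using finite_has_maximal[OF less.prems(1) False] by blast
    have "card {a} \<le> k"
      using less.prems(2)[rule_format, of "{a}"] \<open>a \<in> P\<close> by (simp add: is_antichain_def)
    then obtain k' where k: "k = Suc k'" using not0_implies_Suc by fastforce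
    have "\<forall>Y\<subseteq>P - {a}. is_antichain Y \<longrightarrow> card Y \<le> k" using less.prems(2) by blast
    from less.hyps[OF card_Diff1_less[OF less.prems(1) \<open>a \<in> P\<close>] finite_Diff[OF less.prems(1)] this]
    obtain col where "chain_colouring k col (P - {a})" by blast
    from chain_through_maximal_reduces_width[OF less.prems(1) \<open>a \<in> P\<close> a_max this less.prems(2)]
    obtain K where K: "chain\<^sub>\<subseteq> K" "a \<in> K" "\<forall>Y\<subseteq>P - K. is_antichain Y \<longrightarrow> card Y \<noteq> k"
      by blast
    have smaller: "card (P - K) < card P"
      by (rule psubset_card_mono[OF less.prems(1)]) (use \<open>a \<in> P\<close> K(2) in blast)
    have "\<forall>Y\<subseteq>P - K. is_antichain Y \<longrightarrow> card Y \<le> k'"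
    proof (intro allI impI)
      fix Y assume Y: "Y \<subseteq> P - K" "is_antichain Y"
      then have "Y \<subseteq> P" by blast
      then have "card Y \<le> k" using less.prems(2) Y(2) by blast
      moreover have "card Y \<noteq> k" using K(3) Y by blast
      ultimately show "card Y \<le> k'" using k by simp
    qed
    from less.hyps[OF smaller finite_Diff[OF less.prems(1)] this]
    obtain col' where "chain_colouring k' col' (P - K)" by blast
    then show ?thesis unfolding k by (rule chain_colouring_extend[OF _ K(1)])
  qed
qed

theorem dilworth:
  assumes "finite P" "\<forall>Y\<subseteq>P. is_antichain Y \<longrightarrow> card Y \<le> k"
  obtains K where "P = (\<Union>i<k. K i)" "\<And>i. chain\<^sub>\<subseteq> (K i)"
proof -
  obtain col where "chain_colouring k col P" using chain_colouring_exists[OF assms] by blast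
  show ?thesis
  proof (rule that)
    show "P = (\<Union>i<k. {x \<in> P. col x = i})"
      using \<open>chain_colouring k col P\<close> unfolding chain_colouring_def by auto
    show "chain\<^sub>\<subseteq> {x \<in> P. col x = i}" for i
      using \<open>chain_colouring k col P\<close> unfolding chain_colouring_def by blast
  qed
qed

section \<open>Closure operators and meet-irreducible closed sets\<close>

lemma closure_opD:
  assumes "closure_op f"
  shows closure_op_extensive: "A \<subseteq> f A"
    and closure_op_empty: "f {} = {}"
    and closure_op_idem: "f (f A) = f A"
    and closure_op_mono: "A \<subseteq> B \<Longrightarrow> f A \<subseteq> f B"
  using assms unfolding closure_op_def by auto

lemma P_sets_closed: "B \<in> P_sets f \<Longrightarrow> f B = B"
  unfolding P_sets_def closed_sets_def by auto

lemma UNIV_notin_P_sets: "UNIV \<notin> P_sets f"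
  unfolding P_sets_def by auto

lemma P_sets_mem_Inter_closed:
  assumes "B \<in> P_sets f" "F \<subseteq> closed_sets f" "B = \<Inter>F"
  shows "B \<in> F"
  using assms unfolding P_sets_def by blast

lemma closed_eq_Inter_P_sets:
  fixes f :: "'a::finite set \<Rightarrow> 'a set"
  assumes "f S = S"
  shows "S = \<Inter>{B \<in> P_sets f. S \<subseteq> B}"
  using assms
proof (induction "card (UNIV - S)" arbitrary: S rule: less_induct)
  case less
  show ?case
  proof (cases "S \<in> P_sets f")
    case True
    then show ?thesis by blast
  next
    case False
    then obtain F where F: "F \<subseteq> closed_sets f - {S}" "S = \<Inter>F"
      using less.prems unfolding P_sets_def closed_sets_def by auto
    have "\<Inter>{B \<in> P_sets f. S \<subseteq> B} \<subseteq> T" if "T \<in> F" for T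
    proof -
      have T: "S \<subset> T" "f T = T" using F that unfolding closed_sets_def by auto
      then have "card (UNIV - T) < card (UNIV - S)" by (intro psubset_card_mono) auto
      from less.hyps[OF this T(2)] have "T = \<Inter>{B \<in> P_sets f. T \<subseteq> B}" .
      moreover have "{B \<in> P_sets f. T \<subseteq> B} \<subseteq> {B \<in> P_sets f. S \<subseteq> B}" using T(1) by blast
      ultimately show ?thesis by (metis Inter_anti_mono)
    qed
    then have "\<Inter>{B \<in> P_sets f. S \<subseteq> B} \<subseteq> S" unfolding F(2) by (rule Inter_greatest)
    then show ?thesis by (intro equalityI) auto
  qed
qed

lemma closure_eq_Inter_P_sets:
  fixes f :: "'a::finite set \<Rightarrow> 'a set"
  assumes f: "closure_op f"
  shows "f A = \<Inter>{B \<in> P_sets f. A \<subseteq> B}"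
proof -
  have "A \<subseteq> B \<longleftrightarrow> f A \<subseteq> B" if "B \<in> P_sets f" for B
    using closure_op_extensive[OF f, of A] closure_op_mono[OF f, of A B] P_sets_closed[OF that]
    by auto
  then have "{B \<in> P_sets f. f A \<subseteq> B} = {B \<in> P_sets f. A \<subseteq> B}" by blast
  then show ?thesis using closed_eq_Inter_P_sets[of f "f A", OF closure_op_idem[OF f]] by simp
qed

lemma P_sets_nonempty:
  fixes f :: "'a::finite set \<Rightarrow> 'a set"
  assumes "closure_op f"
  shows "P_sets f \<noteq> {}"
  using closure_eq_Inter_P_sets[OF assms, of "{}"] closure_op_empty[OF assms] by auto

lemma P_sets_fixed_by_component:
  assumes f: "closure_op f"
    and repr: "\<And>A. A \<noteq> {} \<Longrightarrow> f A = (\<Inter>i\<in>I. g i A)"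
    and extensive: "\<And>i A. i \<in> I \<Longrightarrow> A \<subseteq> g i A"
    and idem: "\<And>i A. i \<in> I \<Longrightarrow> g i (g i A) = g i A"
    and B: "B \<in> P_sets f" "B \<noteq> {}"
  shows "\<exists>i\<in>I. g i B = B"
proof -
  have "g i B \<in> closed_sets f" if "i \<in> I" for i
  proof -
    have "g i B \<noteq> {}" using extensive[OF that, of B] B(2) by blast
    then have "f (g i B) = (\<Inter>j\<in>I. g j (g i B))" by (rule repr)
    also have "\<dots> \<subseteq> g i (g i B)" using that by (rule INT_lower)
    finally have "f (g i B) \<subseteq> g i B" unfolding idem[OF that] .
    then have "f (g i B) = g i B" using closure_op_extensive[OF f, of "g i B"] by (rule equalityI)
    then show ?thesis unfolding closed_sets_def by simp
  qed
  then have "(\<lambda>i. g i B) ` I \<subseteq> closed_sets f" by blast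
  moreover have "B = \<Inter>((\<lambda>i. g i B) ` I)" using P_sets_closed[OF B(1)] repr[OF B(2)] by simp
  ultimately have "B \<in> (\<lambda>i. g i B) ` I" by (rule P_sets_mem_Inter_closed[OF B(1)])
  then show ?thesis by (metis imageE)
qed

lemma finite_antichain_cards:
  assumes "finite Q"
  shows "finite {card Y | Y. Y \<subseteq> Q \<and> is_antichain Y}"
proof (rule finite_subset)
  show "{card Y | Y. Y \<subseteq> Q \<and> is_antichain Y} \<subseteq> card ` Pow Q" by blast
  show "finite (card ` Pow Q)" using assms by simp
qed

lemma card_antichain_le_width:
  assumes "finite Q" "Y \<subseteq> Q" "is_antichain Y"
  shows "card Y \<le> width Q"
  unfolding width_def
proof (rule Max_ge[OF finite_antichain_cards[OF assms(1)]])
  show "card Y \<in> {card Y | Y. Y \<subseteq> Q \<and> is_antichain Y}" using assms(2,3) by blast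
qed

lemma width_le:
  assumes "finite Q" "\<And>Y. Y \<subseteq> Q \<Longrightarrow> is_antichain Y \<Longrightarrow> card Y \<le> m"
  shows "width Q \<le> m"
  unfolding width_def
proof (rule Max.boundedI[OF finite_antichain_cards[OF assms(1)]])
  have "{} \<subseteq> Q \<and> is_antichain {}" unfolding is_antichain_def by simp
  then show "{card Y | Y. Y \<subseteq> Q \<and> is_antichain Y} \<noteq> {}" by blast
  show "c \<le> m" if "c \<in> {card Y | Y. Y \<subseteq> Q \<and> is_antichain Y}" for c
    using that assms(2) by blast
qed

lemma card_antichain_Int_chain_le_1:
  assumes "is_antichain Y" "chain\<^sub>\<subseteq> C"
  shows "card (Y \<inter> C) \<le> 1"
proof (cases "finite (Y \<inter> C)")
  case True
  have "A = B" if "A \<in> Y \<inter> C" "B \<in> Y \<inter> C" for A B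
  proof -
    have "A \<subseteq> B \<or> B \<subseteq> A" using assms(2) that unfolding chain_subset_def by (meson IntD2)
    then show "A = B" using assms(1) that unfolding is_antichain_def by (metis IntD1)
  qed
  then show ?thesis using card_le_Suc0_iff_eq[OF True] by simp
qed simp

section \<open>Strategically rational operators and binary classifiers\<close>

lemma weak_order_refl: "weak_order R \<Longrightarrow> R x x"
  unfolding weak_order_def by blast

lemma g_wo_extensive: "weak_order R \<Longrightarrow> A \<subseteq> g_wo R A"
  unfolding g_wo_def using weak_order_refl by fastforce

lemma g_wo_idem:
  assumes "weak_order R"
  shows "g_wo R (g_wo R A) = g_wo R A"
proof (cases "A = {}")
  case False
  then have gA: "g_wo R A = {x. \<exists>a\<in>A. R a x}" by (simp add: g_wo_def)
  have "g_wo R A \<noteq> {}" using False g_wo_extensive[OF assms, of A] by blast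
  then have "g_wo R (g_wo R A) = {x. \<exists>b\<in>g_wo R A. R b x}" by (simp add: g_wo_def)
  also have "\<dots> \<subseteq> g_wo R A" unfolding gA using assms unfolding weak_order_def by blast
  finally show ?thesis using g_wo_extensive[OF assms] by blast
qed (simp add: g_wo_def)

lemma g_wo_fixed_points_chain:
  assumes "weak_order R"
  shows "chain\<^sub>\<subseteq> {A. g_wo R A = A}"
  unfolding chain_subset_def
proof (intro ballI, rule ccontr)
  fix A B assume "A \<in> {A. g_wo R A = A}" "B \<in> {A. g_wo R A = A}" "\<not> (A \<subseteq> B \<or> B \<subseteq> A)"
  then obtain x y where "x \<in> A" "x \<notin> B" "y \<in> B" "y \<notin> A" "g_wo R A = A" "g_wo R B = B" by blast
  moreover have "R x y \<or> R y x" using assms unfolding weak_order_def by blast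
  ultimately show False unfolding g_wo_def by (metis (mono_tags, lifting) empty_iff mem_Collect_eq)
qed

definition chain_order :: "'b set set \<Rightarrow> 'b \<Rightarrow> 'b \<Rightarrow> bool" where
  "chain_order K a x \<longleftrightarrow> (\<forall>B\<in>K. a \<in> B \<longrightarrow> x \<in> B)"

lemma weak_order_chain_order: "chain\<^sub>\<subseteq> K \<Longrightarrow> weak_order (chain_order K)"
  unfolding weak_order_def chain_order_def chain_subset_def by blast

lemma g_wo_chain_order:
  assumes "finite K" "chain\<^sub>\<subseteq> K" "A \<noteq> {}"
  shows "g_wo (chain_order K) A = \<Inter>{B \<in> K. A \<subseteq> B}"
proof
  show "g_wo (chain_order K) A \<subseteq> \<Inter>{B \<in> K. A \<subseteq> B}"
    using assms(3) unfolding g_wo_def chain_order_def by auto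
  show "\<Inter>{B \<in> K. A \<subseteq> B} \<subseteq> g_wo (chain_order K) A"
  proof
    fix x assume x: "x \<in> \<Inter>{B \<in> K. A \<subseteq> B}"
    show "x \<in> g_wo (chain_order K) A"
    proof (rule ccontr)
      assume "x \<notin> g_wo (chain_order K) A"
      then have avoid: "\<forall>a\<in>A. \<exists>B\<in>K. a \<in> B \<and> x \<notin> B"
        using assms(3) unfolding g_wo_def chain_order_def by auto
      define M where "M = {B \<in> K. x \<notin> B}"
      have "finite M" "M \<noteq> {}" "chain\<^sub>\<subseteq> M"
        using assms avoid unfolding M_def chain_subset_def by auto
      then have "\<Union>M \<in> M" by (simp add: Union_in_chain chain_subset_alt_def)
      moreover have "A \<subseteq> \<Union>M" using avoid unfolding M_def by blast
      ultimately show False using x unfolding M_def by blast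
    qed
  qed
qed

lemma g_bc_extensive: "A \<subseteq> g_bc C A"
  unfolding g_bc_def by auto

lemma g_bc_idem: "g_bc C (g_bc C A) = g_bc C A"
  unfolding g_bc_def by auto

lemma g_bc_Inter:
  assumes "A \<noteq> {}"
  shows "(\<Inter>C\<in>\<C>. g_bc C A) = \<Inter>{C \<in> \<C>. A \<subseteq> C}"
  using assms unfolding g_bc_def by auto

section \<open>Minimal representations\<close>

definition wo_representation :: "('a set \<Rightarrow> 'a set) \<Rightarrow> nat \<Rightarrow> (nat \<Rightarrow> 'a \<Rightarrow> 'a \<Rightarrow> bool) \<Rightarrow> bool"
  where "wo_representation f n R \<longleftrightarrow>
    (\<forall>i<n. weak_order (R i)) \<and> (\<forall>A. f A = (\<Inter>i\<in>{..<n}. g_wo (R i) A))"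

definition bc_representation :: "('a set \<Rightarrow> 'a set) \<Rightarrow> nat \<Rightarrow> (nat \<Rightarrow> 'a set) \<Rightarrow> bool"
  where "bc_representation f n C \<longleftrightarrow> (\<forall>A. A \<noteq> {} \<longrightarrow> f A = (\<Inter>i\<in>{..<n}. g_bc (C i) A))"

lemma P_sets_fixed_by_weak_order:
  fixes f :: "'a::finite set \<Rightarrow> 'a set"
  assumes f: "closure_op f" and R: "wo_representation f m R" and B: "B \<in> P_sets f"
  shows "\<exists>i<m. g_wo (R i) B = B"
proof -
  have wo: "\<And>i. i < m \<Longrightarrow> weak_order (R i)" and repr: "\<And>A. f A = (\<Inter>i<m. g_wo (R i) A)"
    using R unfolding wo_representation_def by auto
  show ?thesis
  proof (cases "B = {}")
    case True
    have "m \<noteq> 0" using repr[of "{}"] closure_op_empty[OF f] by auto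
    then show ?thesis using True by (auto simp: g_wo_def)
  next
    case False
    have "\<exists>i\<in>{..<m}. g_wo (R i) B = B"
    proof (rule P_sets_fixed_by_component[OF f, where g = "\<lambda>i. g_wo (R i)"])
      show "f A = (\<Inter>i\<in>{..<m}. g_wo (R i) A)" for A by (rule repr)
      show "A \<subseteq> g_wo (R i) A" if "i \<in> {..<m}" for i A using wo that by (simp add: g_wo_extensive)
      show "g_wo (R i) (g_wo (R i) A) = g_wo (R i) A" if "i \<in> {..<m}" for i A
        using wo that by (simp add: g_wo_idem)
    qed (use B False in auto)
    then show ?thesis by blast
  qed
qed

lemma width_P_sets_le_wo_representation:
  fixes f :: "'a::finite set \<Rightarrow> 'a set"
  assumes f: "closure_op f" and R: "wo_representation f m R"
  shows "width (P_sets f) \<le> m"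
proof (rule width_le)
  fix Y assume Y: "Y \<subseteq> P_sets f" "is_antichain Y"
  have "Y \<subseteq> (\<Union>i<m. Y \<inter> {A. g_wo (R i) A = A})"
    using P_sets_fixed_by_weak_order[OF f R] Y(1) by blast
  then have "card Y \<le> card (\<Union>i<m. Y \<inter> {A. g_wo (R i) A = A})" by (rule card_mono[rotated]) simp
  also have "\<dots> \<le> (\<Sum>i<m. card (Y \<inter> {A. g_wo (R i) A = A}))" by (rule card_UN_le) simp
  also have "\<dots> \<le> (\<Sum>i<m. 1)"
  proof (rule sum_mono)
    fix i assume "i \<in> {..<m}"
    then have "weak_order (R i)" using R unfolding wo_representation_def by simp
    then show "card (Y \<inter> {A. g_wo (R i) A = A}) \<le> 1"
      by (rule card_antichain_Int_chain_le_1[OF Y(2) g_wo_fixed_points_chain])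
  qed
  also have "\<dots> = m" by simp
  finally show "card Y \<le> m" .
qed simp

lemma wo_representation_width:
  fixes f :: "'a::finite set \<Rightarrow> 'a set"
  assumes f: "closure_op f"
  shows "\<exists>R. wo_representation f (width (P_sets f)) R"
proof -
  define k where "k = width (P_sets f)"
  have fin: "finite (P_sets f)" by simp
  have "\<forall>Y\<subseteq>P_sets f. is_antichain Y \<longrightarrow> card Y \<le> k"
    unfolding k_def using card_antichain_le_width[OF fin] by blast
  then obtain K where cover: "P_sets f = (\<Union>i<k. K i)" and chains: "\<And>i. chain\<^sub>\<subseteq> (K i)"
    using dilworth[OF fin] by blast
  obtain B where "B \<in> P_sets f" using P_sets_nonempty[OF f] by blast
  then have "card {B} \<le> k" unfolding k_def
    by (intro card_antichain_le_width[OF fin]) (auto simp: is_antichain_def)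
  then have "k \<noteq> 0" by auto
  have repr: "f A = (\<Inter>i<k. g_wo (chain_order (K i)) A)" for A
  proof (cases "A = {}")
    case True
    then show ?thesis using \<open>k \<noteq> 0\<close> closure_op_empty[OF f] by (auto simp: g_wo_def)
  next
    case False
    then have "(\<Inter>i<k. g_wo (chain_order (K i)) A) = (\<Inter>i<k. \<Inter>{B \<in> K i. A \<subseteq> B})"
      using chains by (simp add: g_wo_chain_order)
    also have "\<dots> = \<Inter>{B \<in> P_sets f. A \<subseteq> B}" unfolding cover by blast
    finally show ?thesis using closure_eq_Inter_P_sets[OF f] by simp
  qed
  show ?thesis unfolding k_def[symmetric]
  proof
    show "wo_representation f k (\<lambda>i. chain_order (K i))"
      using repr weak_order_chain_order[OF chains] unfolding wo_representation_def by blast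
  qed
qed

lemma B_sets_among_classifiers:
  fixes f :: "'a::finite set \<Rightarrow> 'a set"
  assumes f: "closure_op f" and C: "bc_representation f m C" and "B \<in> B_sets f"
  shows "\<exists>i<m. C i = B"
proof -
  have B: "B \<in> P_sets f" "B \<noteq> {}" "B \<noteq> UNIV" using \<open>B \<in> B_sets f\<close> unfolding B_sets_def by auto
  have "\<exists>i\<in>{..<m}. g_bc (C i) B = B"
  proof (rule P_sets_fixed_by_component[OF f, where g = "\<lambda>i. g_bc (C i)"])
    show "f A = (\<Inter>i\<in>{..<m}. g_bc (C i) A)" if "A \<noteq> {}" for A
      using C that unfolding bc_representation_def by blast
    show "A \<subseteq> g_bc (C i) A" for i A by (rule g_bc_extensive)
    show "g_bc (C i) (g_bc (C i) A) = g_bc (C i) A" for i A by (rule g_bc_idem)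
  qed (use B in auto)
  then obtain i where "i < m" "g_bc (C i) B = B" by blast
  moreover have "C i = B" if "g_bc (C i) B = B" for i
    using that B(2,3) unfolding g_bc_def by (auto split: if_splits)
  ultimately show ?thesis by blast
qed

lemma card_B_sets_le_bc_representation:
  fixes f :: "'a::finite set \<Rightarrow> 'a set"
  assumes f: "closure_op f" and C: "bc_representation f m C"
  shows "card (B_sets f) \<le> m"
proof -
  have "B_sets f \<subseteq> C ` {..<m}" using B_sets_among_classifiers[OF f C] by blast
  then have "card (B_sets f) \<le> card (C ` {..<m})" by (simp add: card_mono)
  also have "\<dots> \<le> m" using card_image_le[of "{..<m}" C] by simp
  finally show ?thesis .
qed

lemma bc_representation_B_sets:
  fixes f :: "'a::finite set \<Rightarrow> 'a set"
  assumes f: "closure_op f"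
  shows "\<exists>C. bc_representation f (card (B_sets f)) C"
proof -
  define n where "n = card (B_sets f)"
  obtain h where "bij_betw h {0..<n} (B_sets f)"
    using ex_bij_betw_nat_finite[of "B_sets f"] unfolding n_def by auto
  then have h: "h ` {..<n} = B_sets f" by (simp add: bij_betw_def atLeast0LessThan)
  have "f A = (\<Inter>i<n. g_bc (h i) A)" if "A \<noteq> {}" for A
  proof -
    have "(\<Inter>i<n. g_bc (h i) A) = (\<Inter>C\<in>h ` {..<n}. g_bc C A)" by simp
    also have "\<dots> = \<Inter>{C \<in> B_sets f. A \<subseteq> C}" unfolding h by (rule g_bc_Inter[OF that])
    also have "{C \<in> B_sets f. A \<subseteq> C} = {B \<in> P_sets f. A \<subseteq> B}"
      using that UNIV_notin_P_sets[of f] unfolding B_sets_def by blast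
    finally show ?thesis using closure_eq_Inter_P_sets[OF f] by simp
  qed
  then show ?thesis unfolding bc_representation_def n_def by blast
qed

lemma MNWO_eq_width:
  fixes f :: "'a::finite set \<Rightarrow> 'a set"
  assumes "closure_op f"
  shows "MNWO f = width (P_sets f)"
proof -
  have "MNWO f = (LEAST n. \<exists>R. wo_representation f n R)"
    unfolding MNWO_def wo_representation_def ..
  also have "\<dots> = width (P_sets f)"
  proof (rule Least_equality)
    show "\<exists>R. wo_representation f (width (P_sets f)) R" by (rule wo_representation_width[OF assms])
    show "width (P_sets f) \<le> m" if "\<exists>R. wo_representation f m R" for m
      using that width_P_sets_le_wo_representation[OF assms] by blast
  qed
  finally show ?thesis .
qed

lemma MNBC_eq_card_B_sets:
  fixes f :: "'a::finite set \<Rightarrow> 'a set"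
  assumes "closure_op f"
  shows "MNBC f = card (B_sets f)"
proof -
  have "MNBC f = (LEAST n. \<exists>C. bc_representation f n C)"
    unfolding MNBC_def bc_representation_def ..
  also have "\<dots> = card (B_sets f)"
  proof (rule Least_equality)
    show "\<exists>C. bc_representation f (card (B_sets f)) C" by (rule bc_representation_B_sets[OF assms])
    show "card (B_sets f) \<le> m" if "\<exists>C. bc_representation f m C" for m
      using that card_B_sets_le_bc_representation[OF assms] by blast
  qed
  finally show ?thesis .
qed

theorem proposition3:
  fixes f :: "'a::finite set \<Rightarrow> 'a set"
  assumes "closure_op f"
  shows "MNWO f = width (P_sets f) \<and> MNBC f = card (B_sets f)"
  using MNWO_eq_width[OF assms] MNBC_eq_card_B_sets[OF assms] by simp

end
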